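(* Let $m<k$ be positive integers with $\gcd(m,k)=1$, $t\ge2$ an integer, and $n=tk$ (without offset) or $n=2(tk-m)$ (with offset); let $w=k$ (without offset) or $w=n/2$ (with offset). For each $0\le i<w$, the placement procedure for wedge $i$ described in the context is well-defined (for $i\ge1$, an index $j$ with $f^{i-1}_j=i$ exists, so $j^*$ is defined). Moreover, if $i\ge1$, the lower boundary of wedge $i$ aligns exactly with the front after placing wedge $i-1$, i.e. $\ell^i_j=f^{i-1}_{j^*+j}$ for all $j\ge0$. Finally, the front after placing wedge $i$ satisfies $f^i_j=s^{i+1}_j$ for all $j\ge0$.
   Context: Let $\vec v_i=(\cos\frac{2\pi i}{n},\sin\frac{2\pi i}{n})$. Wedge $0$ is a region tiled by translates of a fixed polygon (the prototile), bounded by its lower boundary, the polygonal path from the origin with successive steps $\vec v_{b_0},\vec v_{b_1},\dots$ where $b_j=\ell^0_j:=jm\bmod k$, and its upper boundary, the polygonal path from the origin with successive steps $\vec v_{u^0_j}$, where $u^0_j=jm\bmod k$ if this is nonzero and $u^0_j=k$ otherwise. Its base edge is the first segment of the lower boundary. Set $\ell^i_j=\ell^0_j+i$ and $u^i_j=u^0_j+i$. Placement: the front after wedge $0$ has direction sequence $f^0_j=u^0_j$. For $i\ge1$, let $j^*$ be the minimal index with $f^{i-1}_{j^*}=i$; wedge $i$ is wedge $0$ rotated counterclockwise by $\frac{2\pi i}{n}$ about the origin and translated by $\sum_{j=0}^{j^*-1}\vec v_{f^{i-1}_j}$ (so its base edge coincides with the first front edge in direction $i$); its lower and upper boundaries have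 direction sequences $(\ell^i_j)$ and $(u^i_j)$. The new front (upper boundary of the region covered so far, starting at the origin) has direction sequence $f^i_j=f^{i-1}_j$ for $j<j^*$ and $f^i_{j^*+j}=u^i_j$ for $j\ge0$. Shifted modular progression: $s^0_j=jm\bmod k$, and $s^{i+1}_j=s^i_j+k$ if $s^i_j=i$, $s^{i+1}_j=s^i_j$ otherwise. *)

theory Defs
  imports Main
begin

text \<open>Direction indices (naturals; the direction vector for index d is
  (cos(2 pi d/n), sin(2 pi d/n)), so only the index sequences matter).\<close>

definition lower0 :: "nat \<Rightarrow> nat \<Rightarrow> nat \<Rightarrow> nat" where
  "lower0 m k j = (j * m) mod k"

definition upper0 :: "nat \<Rightarrow> nat \<Rightarrow> nat \<Rightarrow> nat" where
  "upper0 m k j = (if (j * m) mod k \<noteq> 0 then (j * m) mod k else k)"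

definition lowerw :: "nat \<Rightarrow> nat \<Rightarrow> nat \<Rightarrow> nat \<Rightarrow> nat" where
  "lowerw m k i j = lower0 m k j + i"

definition upperw :: "nat \<Rightarrow> nat \<Rightarrow> nat \<Rightarrow> nat \<Rightarrow> nat" where
  "upperw m k i j = upper0 m k j + i"

fun front :: "nat \<Rightarrow> nat \<Rightarrow> nat \<Rightarrow> nat \<Rightarrow> nat" where
  "front m k 0 j = upperw m k 0 j"
| "front m k (Suc i) j =
     (let js = (LEAST j'. front m k i j' = Suc i)
      in if j < js then front m k i j else upperw m k (Suc i) (j - js))"

definition jstar :: "nat \<Rightarrow> nat \<Rightarrow> nat \<Rightarrow> nat" where
  "jstar m k i = (LEAST j. front m k (i - 1) j = i)"

fun shifted :: "nat \<Rightarrow> nat \<Rightarrow> nat \<Rightarrow> nat \<Rightarrow> nat" where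
  "shifted m k 0 j = (j * m) mod k"
| "shifted m k (Suc i) j =
     (if shifted m k i j = i then shifted m k i j + k else shifted m k i j)"

end

theory Submission
  imports Defs "HOL-Number_Theory.Cong"
begin

text \<open>At stage i every entry of the shifted progression lies in the window
  [i, i + k) and is congruent to j m modulo k, and these two facts determine it.
  Coprimality makes the residue i attained, so the first entry equal to i exists.
  From that position L on, the rotated upper boundary u^i has entries in the next
  window [i + 1, i + k] and the rotated lower boundary l^i entries in [i, i + k),
  both with the residues of (L + j) m; hence they agree with the progression.\<close>

lemma eq_if_mod_eq_in_window:
  fixes a b l k :: nat
  assumes "l \<le> a" "a < l + k" "l \<le> b" "b < l + k" "a mod k = b mod k"
  shows "a = b"
proof -
  have "y = x" if lo: "l \<le> x" and hi: "y < l + k" and le: "x \<le> y"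
    and cong: "x mod k = y mod k" for x y
  proof -
    obtain s where s: "y = x + k * s"
      using mod_eq_nat2E[OF cong le] .
    with lo hi have "k * s < k" by linarith
    then have "s = 0" by (cases s) auto
    with s show ?thesis by simp
  qed
  from this[of a b] this[of b a] assms show ?thesis by linarith
qed

lemma shifted_mod: "shifted m k i j mod k = (j * m) mod k"
  by (induction i) auto

lemma shifted_window:
  assumes "0 < k"
  shows "i \<le> shifted m k i j \<and> shifted m k i j < i + k"
  using assms by (induction i) auto

lemma shifted_unique:
  assumes "0 < k" "l \<le> x" "x < l + k" "x mod k = (j * m) mod k"
  shows "shifted m k l j = x"
  using eq_if_mod_eq_in_window[of l "shifted m k l j" k x] shifted_window[OF assms(1)]
    shifted_mod assms(2-4) by simp

lemma shifted_eq_level_iff: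
  assumes "0 < k"
  shows "shifted m k i j = i \<longleftrightarrow> (j * m) mod k = i mod k"
  using shifted_unique[OF assms, where l = i and x = i and j = j and m = m]
    shifted_mod[of m k i j] assms by auto

lemma ex_shifted_eq_level:
  assumes "0 < k" "coprime m k"
  shows "\<exists>j. shifted m k i j = i"
proof -
  obtain x where "[m * x = 1] (mod k)"
    using cong_solve_coprime_nat[OF assms(2)] by auto
  then have "[x * i * m = i] (mod k)"
    using cong_scalar_right[of "m * x" 1 k i] by (simp add: ac_simps)
  then show ?thesis
    using shifted_eq_level_iff[OF assms(1)] by (auto simp: cong_def)
qed

lemma Least_shifted_eq_level_mod:
  assumes "0 < k" "coprime m k"
  shows "((LEAST j. shifted m k i j = i) * m) mod k = i mod k"
  using LeastI_ex[OF ex_shifted_eq_level[OF assms]] shifted_eq_level_iff[OF assms(1)]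
  by blast

lemma shifted_after_hit:
  assumes "0 < k" "(L * m) mod k = i mod k"
    and "l \<le> r + i" "r + i < l + k" "r mod k = (j * m) mod k"
  shows "shifted m k l (L + j) = r + i"
proof (rule shifted_unique[OF assms(1,3,4)])
  have "(r + i) mod k = (j * m + L * m) mod k"
    using assms(2,5) by (metis mod_add_eq)
  then show "(r + i) mod k = ((L + j) * m) mod k"
    by (simp add: algebra_simps)
qed

lemma front_eq_shifted:
  assumes "0 < k" "coprime m k"
  shows "front m k i = shifted m k (Suc i)"
proof (induction i)
  case 0
  show ?case by (auto simp: upperw_def upper0_def)
next
  case (Suc i)
  define L where "L = (LEAST j. shifted m k (Suc i) j = Suc i)"
  have L_mod: "(L * m) mod k = Suc i mod k"
    unfolding L_def by (rule Least_shifted_eq_level_mod[OF assms])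
  have front_Suc: "front m k (Suc i) j =
      (if j < L then shifted m k (Suc i) j else upperw m k (Suc i) (j - L))" for j
    by (simp add: Suc L_def Let_def del: shifted.simps)
  show ?case
  proof
    fix j
    show "front m k (Suc i) j = shifted m k (Suc (Suc i)) j"
    proof (cases "j < L")
      case True
      then have "shifted m k (Suc i) j \<noteq> Suc i"
        unfolding L_def by (rule not_less_Least)
      with True show ?thesis
        unfolding front_Suc by simp
    next
      case False
      let ?u = "upper0 m k (j - L)"
      have u: "?u mod k = ((j - L) * m) mod k" "1 \<le> ?u" "?u \<le> k"
        using assms(1) by (auto simp: upper0_def)
      have "shifted m k (Suc (Suc i)) (L + (j - L)) = ?u + Suc i"
        by (rule shifted_after_hit[OF assms(1) L_mod]) (use u in linarith)+
      with False show ?thesis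
        unfolding front_Suc by (simp add: upperw_def)
    qed
  qed
qed

lemma lowerw_eq_front_from_jstar:
  assumes "0 < k" "coprime m k" "1 \<le> i"
  shows "lowerw m k i j = front m k (i - 1) (jstar m k i + j)"
proof -
  have front_prev: "front m k (i - 1) = shifted m k i"
    using front_eq_shifted[OF assms(1,2), of "i - 1"] assms(3) by simp
  then have jstar: "jstar m k i = (LEAST j. shifted m k i j = i)"
    by (simp add: jstar_def)
  have low: "lower0 m k j mod k = (j * m) mod k" "lower0 m k j < k"
    using assms(1) by (auto simp: lower0_def)
  have "shifted m k i ((LEAST j. shifted m k i j = i) + j) = lower0 m k j + i"
    by (rule shifted_after_hit[OF assms(1) Least_shifted_eq_level_mod[OF assms(1,2)]])
      (use low in linarith)+
  then show ?thesis
    unfolding front_prev jstar lowerw_def by simp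
qed

theorem mainTheorem2:
  fixes m k t n w i :: nat and offset :: bool
  assumes "0 < m" "m < k" "coprime m k" "t \<ge> 2"
    and "n = (if offset then 2 * (t * k - m) else t * k)"
    and "w = (if offset then n div 2 else k)"
    and "i < w"
  shows "(1 \<le> i \<longrightarrow> (\<exists>j. front m k (i - 1) j = i))
       \<and> (1 \<le> i \<longrightarrow> (\<forall>j. lowerw m k i j = front m k (i - 1) (jstar m k i + j)))
       \<and> (\<forall>j. front m k i j = shifted m k (i + 1) j)"
proof -
  have k: "0 < k" using assms(1,2) by simp
  have "1 \<le> i \<Longrightarrow> front m k (i - 1) = shifted m k i"
    using front_eq_shifted[OF k assms(3), of "i - 1"] by simp
  then show ?thesis
    using ex_shifted_eq_level[OF k assms(3)] lowerw_eq_front_from_jstar[OF k assms(3)]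
      front_eq_shifted[OF k assms(3)] by simp
qed

end
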